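(* Let $d$ be a prime and $\omega=e^{2\pi i/d}$. For each $l\in\{0,1,\dots,d-1\}$ (identified with $\mathbb{Z}_d$) choose $\theta(l)\in U(1)$ with $\theta(l)^d=\omega^l$ (for instance $\theta(l)=e^{2\pi i l/d^2}$), and define the unitary $M(l)$ on $\mathbb{C}^d$ by $M(l)|q\rangle=\theta(l)\,\omega^{l q^{d-1}}|q+1\rangle$ for $q\in\{0,\dots,d-1\}$ (addition in $q+1$ modulo $d$). Let $|\psi\rangle=\frac{1}{\sqrt d}\sum_{q=0}^{d-1}|q\rangle\otimes|q\rangle\otimes|q\rangle$. For an input $\mathbf{i}=(i_1,i_2)\in\mathbb{Z}_d^2$ set $l_1(\mathbf{i})=i_1$, $l_2(\mathbf{i})=i_2$, $l_3(\mathbf{i})=-i_1-i_2$ (in $\mathbb{Z}_d$), and consider the deterministic, non-adaptive measurement-based computation with $\mathbb{Z}_d$-linear side-processing in which, on input $\mathbf{i}$, the operator $M(l_1(\mathbf{i}))\otimes M(l_2(\mathbf{i}))\otimes M(l_3(\mathbf{i}))$ is measured on $|\psi\rangle$, with output $o(\mathbf{i})\in\mathbb{Z}_d$ determined by $M(l_1(\mathbf{i}))\otimes M(l_2(\mathbf{i}))\otimes M(l_3(\mathbf{i}))|\psi\rangle=\omega^{o(\mathbf{i})}|\psi\rangle$. Then this computation is contextual: there exist no functions $m_1,m_2,m_3:\mathbb{Z}_d\to\mathbb{Z}_d$ such that $o(\mathbf{i})=m_1(l_1(\mathbf{i}))+m_2(l_2(\mathbf{i}))+m_3(l_3(\mathbf{i}))\bmod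 d$ for all $\mathbf{i}\in\mathbb{Z}_d^2$.
   Context: The state $|\psi\rangle$ is a common eigenvector of all the operators $M(l_1(\mathbf{i}))\otimes M(l_2(\mathbf{i}))\otimes M(l_3(\mathbf{i}))$, with eigenvalues that are $d$-th roots of unity, so $o:\mathbb{Z}_d^2\to\mathbb{Z}_d$ is well defined and the computation is deterministic. A (deterministic) noncontextual hidden variable model for the computation is an assignment of outcomes $m_k(l)\in\mathbb{Z}_d$ to each local measurement $M(l)$ on qudit $k$, independent of the input, such that the output equals the sum modulo $d$ of the local outcomes of the measurements performed; the computation is called contextual if no such model exists. *)

theory Defs
  imports Complex_Main "HOL-Computational_Algebra.Primes"
begin

text \<open>Operators on C^d are
  represented by their matrix entries  A a x = <a|A|x>  (indices < d); vectors on
  (C^d)^{\<otimes>3} by their coefficient functions.\<close>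

definition omega :: "nat \<Rightarrow> complex" where
  "omega d = exp (2 * pi * \<i> / of_nat d)"

definition Mop :: "nat \<Rightarrow> (nat \<Rightarrow> complex) \<Rightarrow> nat \<Rightarrow> nat \<Rightarrow> nat \<Rightarrow> complex" where
  "Mop d \<theta> l a x = (if a = (x + 1) mod d then \<theta> l * omega d ^ (l * x ^ (d - 1)) else 0)"

definition psi :: "nat \<Rightarrow> nat \<Rightarrow> nat \<Rightarrow> nat \<Rightarrow> complex" where
  "psi d x y z = (if x = y \<and> y = z then complex_of_real (1 / sqrt (real d)) else 0)"

definition tensor3_apply ::
  "nat \<Rightarrow> (nat \<Rightarrow> nat \<Rightarrow> complex) \<Rightarrow> (nat \<Rightarrow> nat \<Rightarrow> complex) \<Rightarrow> (nat \<Rightarrow> nat \<Rightarrow> complex)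
   \<Rightarrow> (nat \<Rightarrow> nat \<Rightarrow> nat \<Rightarrow> complex) \<Rightarrow> nat \<Rightarrow> nat \<Rightarrow> nat \<Rightarrow> complex" where
  "tensor3_apply d A B C v a b c =
     (\<Sum>x<d. \<Sum>y<d. \<Sum>z<d. A a x * B b y * C c z * v x y z)"

definition l1 :: "nat \<Rightarrow> nat \<Rightarrow> nat \<Rightarrow> nat" where "l1 d i1 i2 = i1 mod d"
definition l2 :: "nat \<Rightarrow> nat \<Rightarrow> nat \<Rightarrow> nat" where "l2 d i1 i2 = i2 mod d"
definition l3 :: "nat \<Rightarrow> nat \<Rightarrow> nat \<Rightarrow> nat" where
  "l3 d i1 i2 = nat ((- int i1 - int i2) mod int d)"

definition mbqc_output :: "nat \<Rightarrow> (nat \<Rightarrow> complex) \<Rightarrow> nat \<Rightarrow> nat \<Rightarrow> nat" where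
  "mbqc_output d \<theta> i1 i2 = (THE k. k < d \<and>
     (\<forall>a<d. \<forall>b<d. \<forall>c<d.
        tensor3_apply d (Mop d \<theta> (l1 d i1 i2)) (Mop d \<theta> (l2 d i1 i2)) (Mop d \<theta> (l3 d i1 i2))
          (psi d) a b c = omega d ^ k * psi d a b c))"

end

theory Submission
  imports Defs "HOL-Number_Theory.Cong"
begin

text \<open>
  The measured operator has \<open>|psi>\<close> as eigenvector with eigenvalue
  \<open>theta(l\<^sub>1) theta(l\<^sub>2) theta(l\<^sub>3)\<close>: the \<open>omega\<close>-phases of the three factors
  combine to \<open>omega^((l\<^sub>1 + l\<^sub>2 + l\<^sub>3) q^(d-1)) = 1\<close>.
  Fix \<open>i\<^sub>2 = y\<close> and sum the outputs over \<open>i\<^sub>1\<close>. As \<open>i\<^sub>1\<close> runs through \<open>Z\<^sub>d\<close>, so does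
  \<open>l\<^sub>3 = -i\<^sub>1 - y\<close>, hence \<open>omega\<close> raised to this column sum equals
  \<open>P\<^sup>2 theta(y)\<^sup>d = P\<^sup>2 omega\<^sup>y\<close> with \<open>P = \<Prod>\<^sub>l theta(l)\<close>.
  For a noncontextual model the same column sum is \<open>\<Sum> m\<^sub>1 + d m\<^sub>2(y) + \<Sum> m\<^sub>3\<close>
  modulo \<open>d\<close>, independent of \<open>y\<close>; comparing \<open>y = 0\<close> with \<open>y = 1\<close> gives \<open>omega = 1\<close>.
\<close>

lemma omega_power: "omega d ^ k = cis (2 * pi * real k / real d)"
  unfolding omega_def cis_conv_exp by (simp add: exp_of_nat_mult[symmetric] mult_ac)

lemma omega_nonzero: "omega d \<noteq> 0"
  by (simp add: omega_def)

lemma bij_betw_omega_power: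
  "d > 0 \<Longrightarrow> bij_betw (\<lambda>k. omega d ^ k) {..<d} {z. z ^ d = 1}"
  unfolding omega_power by (rule bij_betw_roots_unity)

lemma root_of_unity_omega_powerE:
  assumes "d > 0" "z ^ d = 1"
  obtains k where "k < d" "omega d ^ k = z"
proof -
  have "z \<in> (\<lambda>k. omega d ^ k) ` {..<d}"
    using assms(2) bij_betw_imp_surj_on[OF bij_betw_omega_power[OF assms(1)]] by simp
  then show ?thesis
    using that by blast
qed

lemma omega_power_mod:
  assumes "d > 0"
  shows "omega d ^ (n mod d) = omega d ^ n"
proof -
  have "omega d ^ d = 1"
    using assms by (simp add: omega_power)
  have "omega d ^ n = (omega d ^ d) ^ (n div d) * omega d ^ (n mod d)"
    by (simp flip: power_mult power_add)
  also have "\<dots> = omega d ^ (n mod d)"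
    using \<open>omega d ^ d = 1\<close> by simp
  finally show ?thesis
    by (rule sym)
qed

lemma omega_power_eq_iff:
  assumes "d > 0"
  shows "omega d ^ m = omega d ^ n \<longleftrightarrow> m mod d = n mod d"
proof -
  have "inj_on (\<lambda>k. omega d ^ k) {..<d}"
    using bij_betw_omega_power[OF assms] by (rule bij_betw_imp_inj_on)
  then have "omega d ^ (m mod d) = omega d ^ (n mod d) \<longleftrightarrow> m mod d = n mod d"
    by (rule inj_on_eq_iff) (simp_all add: assms)
  then show ?thesis
    by (simp only: omega_power_mod[OF assms])
qed

lemma omega_power_eq_1:
  assumes "d dvd n"
  shows "omega d ^ n = 1"
proof (cases "d = 0")
  case True
  then show ?thesis
    using assms by simp
next
  case False
  then have "omega d ^ n = omega d ^ (n mod d)"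
    by (simp add: omega_power_mod)
  then show ?thesis
    using assms by simp
qed

lemma bij_betw_Suc_mod: "(d::nat) > 0 \<Longrightarrow> bij_betw (\<lambda>x. (x + 1) mod d) {..<d} {..<d}"
proof -
  assume d: "d > 0"
  have "inj_on (\<lambda>x. (x + 1) mod d) {..<d}"
  proof (rule inj_onI)
    fix x x' assume x: "x \<in> {..<d}" "x' \<in> {..<d}" and "(x + 1) mod d = (x' + 1) mod d"
    then have "[x = x'] (mod d)"
      by (simp only: cong_add_rcancel_nat flip: cong_def)
    then show "x = x'"
      using x by (simp add: cong_less_modulus_unique_nat)
  qed
  moreover have "(\<lambda>x. (x + 1) mod d) ` {..<d} \<subseteq> {..<d}"
    using d by auto
  ultimately show ?thesis
    by (simp add: bij_betw_def endo_inj_surj)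
qed

lemma int_l3: "d > 0 \<Longrightarrow> int (l3 d i1 i2) = (- int i1 - int i2) mod int d"
  by (simp add: l3_def)

lemma l3_less: "d > 0 \<Longrightarrow> l3 d i1 i2 < d"
  by (simp add: l3_def nat_less_iff)

lemma bij_betw_l3: "d > 0 \<Longrightarrow> bij_betw (\<lambda>x. l3 d x y) {..<d} {..<d}"
proof -
  assume d: "d > 0"
  have "inj_on (\<lambda>x. l3 d x y) {..<d}"
  proof (rule inj_onI)
    fix x x' assume x: "x \<in> {..<d}" "x' \<in> {..<d}" and eq: "l3 d x y = l3 d x' y"
    have "[- int x + - int y = - int x' + - int y] (mod int d)"
      using int_l3[OF d, of x y] int_l3[OF d, of x' y] eq by (simp add: cong_def)
    then have "[x = x'] (mod d)"
      by (simp only: cong_add_rcancel cong_minus_minus_iff cong_int_iff)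
    then show "x = x'"
      using x by (simp add: cong_less_modulus_unique_nat)
  qed
  moreover have "(\<lambda>x. l3 d x y) ` {..<d} \<subseteq> {..<d}"
    using d by (auto simp: l3_less)
  ultimately show ?thesis
    by (simp add: bij_betw_def endo_inj_surj)
qed

lemma dvd_l1_l2_l3:
  assumes "d > 0"
  shows "d dvd l1 d i1 i2 + l2 d i1 i2 + l3 d i1 i2"
proof -
  have "[int (l1 d i1 i2) = int i1] (mod int d)" "[int (l2 d i1 i2) = int i2] (mod int d)"
    by (simp_all add: l1_def l2_def cong_def flip: of_nat_mod)
  moreover have "[int (l3 d i1 i2) = - int i1 - int i2] (mod int d)"
    using assms by (simp add: int_l3 cong_def)
  ultimately have "[int (l1 d i1 i2) + int (l2 d i1 i2) + int (l3 d i1 i2)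
      = int i1 + int i2 + (- int i1 - int i2)] (mod int d)"
    by (intro cong_add)
  then have "int d dvd int (l1 d i1 i2 + l2 d i1 i2 + l3 d i1 i2)"
    by (simp add: cong_0_iff)
  then show ?thesis
    by (simp only: int_dvd_int_iff)
qed

lemma psi_eq: "psi d x y z = (if z = x then if y = x then psi d x x x else 0 else 0)"
  by (simp add: psi_def)

lemma tensor3_apply_psi:
  "tensor3_apply d A B C (psi d) a b c
     = complex_of_real (1 / sqrt (real d)) * (\<Sum>x<d. A a x * B b x * C c x)"
proof -
  have "(\<Sum>y<d. \<Sum>z<d. A a x * B b y * C c z * psi d x y z) = A a x * B b x * C c x * psi d x x x"
    if "x < d" for x
    using that by (subst psi_eq) (simp add: if_distrib[of "\<lambda>t. _ * t"] sum.delta cong: if_cong)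
  then show ?thesis
    unfolding tensor3_apply_def by (simp add: psi_def sum_distrib_left mult_ac)
qed

lemma Mop_product:
  assumes "d dvd k1 + k2 + k3"
  shows "Mop d \<theta> k1 a x * Mop d \<theta> k2 b x * Mop d \<theta> k3 c x
       = (if a = (x + 1) mod d \<and> b = a \<and> c = a then \<theta> k1 * \<theta> k2 * \<theta> k3 else 0)"
proof (cases "a = (x + 1) mod d \<and> b = a \<and> c = a")
  case True
  let ?e = "\<lambda>k. omega d ^ (k * x ^ (d - 1))"
  have "?e k1 * ?e k2 * ?e k3 = omega d ^ ((k1 + k2 + k3) * x ^ (d - 1))"
    by (simp add: power_add distrib_right)
  also have "\<dots> = 1"
    using assms by (intro omega_power_eq_1) simp
  finally have phases: "?e k1 * ?e k2 * ?e k3 = 1" .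
  have "\<theta> k1 * ?e k1 * (\<theta> k2 * ?e k2) * (\<theta> k3 * ?e k3)
      = \<theta> k1 * \<theta> k2 * \<theta> k3 * (?e k1 * ?e k2 * ?e k3)"
    by (simp only: mult_ac)
  also have "\<dots> = \<theta> k1 * \<theta> k2 * \<theta> k3"
    by (simp only: phases mult_1_right)
  finally show ?thesis
    using True by (simp add: Mop_def)
next
  case False
  then show ?thesis
    by (auto simp: Mop_def)
qed

lemma tensor3_apply_Mop_psi:
  assumes "d > 0" "d dvd k1 + k2 + k3" "a < d"
  shows "tensor3_apply d (Mop d \<theta> k1) (Mop d \<theta> k2) (Mop d \<theta> k3) (psi d) a b c
       = \<theta> k1 * \<theta> k2 * \<theta> k3 * psi d a b c"
proof -
  define g where "g a' = (if a' = a then if b = a \<and> c = a then \<theta> k1 * \<theta> k2 * \<theta> k3 else 0 else 0)"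
    for a'
  have "(\<Sum>x<d. Mop d \<theta> k1 a x * Mop d \<theta> k2 b x * Mop d \<theta> k3 c x) = (\<Sum>x<d. g ((x + 1) mod d))"
    using assms(2) by (intro sum.cong) (auto simp: Mop_product g_def)
  also have "\<dots> = (\<Sum>a'<d. g a')"
    by (rule sum.reindex_bij_betw[OF bij_betw_Suc_mod[OF assms(1)], where g = g])
  also have "\<dots> = (if b = a \<and> c = a then \<theta> k1 * \<theta> k2 * \<theta> k3 else 0)"
    using assms(3) by (simp add: g_def sum.delta)
  finally show ?thesis
    by (simp add: tensor3_apply_psi psi_def)
qed

lemma mbqc_output_eqI:
  assumes "d > 0" "k < d"
    and "omega d ^ k = \<theta> (l1 d i1 i2) * \<theta> (l2 d i1 i2) * \<theta> (l3 d i1 i2)"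
  shows "mbqc_output d \<theta> i1 i2 = k"
proof -
  define k1 k2 k3 where "k1 = l1 d i1 i2" and "k2 = l2 d i1 i2" and "k3 = l3 d i1 i2"
  define eigen where "eigen k \<longleftrightarrow> k < d \<and> (\<forall>a<d. \<forall>b<d. \<forall>c<d.
      tensor3_apply d (Mop d \<theta> k1) (Mop d \<theta> k2) (Mop d \<theta> k3) (psi d) a b c
        = omega d ^ k * psi d a b c)" for k
  have dvd: "d dvd k1 + k2 + k3"
    unfolding k1_def k2_def k3_def using assms(1) by (rule dvd_l1_l2_l3)
  have k: "omega d ^ k = \<theta> k1 * \<theta> k2 * \<theta> k3"
    using assms(3) by (simp add: k1_def k2_def k3_def)
  have "eigen k"
    using assms(1,2) dvd k by (simp add: eigen_def tensor3_apply_Mop_psi)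
  moreover have "k' = k" if "eigen k'" for k'
  proof -
    have "psi d 0 0 0 \<noteq> 0"
      using assms(1) by (simp add: psi_def)
    moreover have "\<theta> k1 * \<theta> k2 * \<theta> k3 * psi d 0 0 0 = omega d ^ k' * psi d 0 0 0"
      using that assms(1) dvd by (simp add: eigen_def tensor3_apply_Mop_psi)
    ultimately have "omega d ^ k' = omega d ^ k"
      using k by simp
    then have "k' mod d = k mod d"
      by (simp only: omega_power_eq_iff[OF assms(1)])
    then show "k' = k"
      using that assms(2) by (simp add: eigen_def)
  qed
  ultimately show ?thesis
    unfolding mbqc_output_def k1_def[symmetric] k2_def[symmetric] k3_def[symmetric]
      eigen_def[symmetric] by (rule the_equality)
qed

lemma omega_power_mbqc_output:
  assumes "d > 0" and \<theta>: "\<And>l. l < d \<Longrightarrow> \<theta> l ^ d = omega d ^ l"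
  shows "omega d ^ mbqc_output d \<theta> i1 i2 = \<theta> (l1 d i1 i2) * \<theta> (l2 d i1 i2) * \<theta> (l3 d i1 i2)"
proof -
  let ?T = "\<theta> (l1 d i1 i2) * \<theta> (l2 d i1 i2) * \<theta> (l3 d i1 i2)"
  have less: "l1 d i1 i2 < d" "l2 d i1 i2 < d" "l3 d i1 i2 < d"
    using assms(1) by (simp_all add: l1_def l2_def l3_less)
  have "?T ^ d = omega d ^ l1 d i1 i2 * omega d ^ l2 d i1 i2 * omega d ^ l3 d i1 i2"
    by (simp only: power_mult_distrib \<theta>[OF less(1)] \<theta>[OF less(2)] \<theta>[OF less(3)])
  also have "\<dots> = omega d ^ (l1 d i1 i2 + l2 d i1 i2 + l3 d i1 i2)"
    by (simp only: power_add)
  also have "\<dots> = 1"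
    using assms(1) by (intro omega_power_eq_1 dvd_l1_l2_l3)
  finally obtain k where k: "k < d" "omega d ^ k = ?T"
    using assms(1) by (elim root_of_unity_omega_powerE)
  then have "mbqc_output d \<theta> i1 i2 = k"
    by (intro mbqc_output_eqI[OF assms(1)])
  with k(2) show ?thesis
    by simp
qed

lemma omega_power_column_sum:
  assumes "d > 0" and \<theta>: "\<And>l. l < d \<Longrightarrow> \<theta> l ^ d = omega d ^ l" and "y < d"
  shows "omega d ^ (\<Sum>x<d. mbqc_output d \<theta> x y) = (\<Prod>x<d. \<theta> x)\<^sup>2 * omega d ^ y"
proof -
  have "omega d ^ (\<Sum>x<d. mbqc_output d \<theta> x y) = (\<Prod>x<d. omega d ^ mbqc_output d \<theta> x y)"
    by (rule power_sum)
  also have "\<dots> = (\<Prod>x<d. \<theta> x * \<theta> y * \<theta> (l3 d x y))"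
    using assms by (intro prod.cong) (simp_all add: omega_power_mbqc_output l1_def l2_def)
  also have "\<dots> = (\<Prod>x<d. \<theta> x) * \<theta> y ^ d * (\<Prod>x<d. \<theta> (l3 d x y))"
    by (simp add: prod.distrib)
  also have "(\<Prod>x<d. \<theta> (l3 d x y)) = (\<Prod>x<d. \<theta> x)"
    by (rule prod.reindex_bij_betw[OF bij_betw_l3[OF assms(1)], where g = \<theta>])
  finally show ?thesis
    using \<theta>[OF \<open>y < d\<close>] by (simp add: power2_eq_square mult_ac)
qed

lemma noncontextual_column_sum_mod:
  fixes f :: "nat \<Rightarrow> nat \<Rightarrow> nat"
  assumes "d > 0" "y < d"
    and model: "\<forall>i1<d. \<forall>i2<d. f i1 i2 = (m1 (l1 d i1 i2) + m2 (l2 d i1 i2) + m3 (l3 d i1 i2)) mod d"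
  shows "(\<Sum>x<d. f x y) mod d = (sum m1 {..<d} + sum m3 {..<d}) mod d"
proof -
  have "[\<Sum>x<d. f x y = (\<Sum>x<d. m1 x + m2 y + m3 (l3 d x y))] (mod d)"
    using assms by (intro cong_sum) (simp add: l1_def l2_def cong_def)
  also have "(\<Sum>x<d. m1 x + m2 y + m3 (l3 d x y)) = sum m1 {..<d} + sum m3 {..<d} + d * m2 y"
    using sum.reindex_bij_betw[OF bij_betw_l3[OF assms(1)], where g = m3]
    by (simp add: sum.distrib)
  also have "[\<dots> = sum m1 {..<d} + sum m3 {..<d}] (mod d)"
    by (simp add: cong_def)
  finally show ?thesis
    by (simp add: cong_def)
qed

theorem theorem1:
  fixes d :: nat and \<theta> :: "nat \<Rightarrow> complex"
  assumes "prime d"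
    and "\<And>l. l < d \<Longrightarrow> norm (\<theta> l) = 1 \<and> \<theta> l ^ d = omega d ^ l"
  shows "\<not> (\<exists>m1 m2 m3 :: nat \<Rightarrow> nat. \<forall>i1<d. \<forall>i2<d.
            mbqc_output d \<theta> i1 i2 = (m1 (l1 d i1 i2) + m2 (l2 d i1 i2) + m3 (l3 d i1 i2)) mod d)"
proof (intro notI, elim exE)
  fix m1 m2 m3 :: "nat \<Rightarrow> nat"
  assume model: "\<forall>i1<d. \<forall>i2<d.
      mbqc_output d \<theta> i1 i2 = (m1 (l1 d i1 i2) + m2 (l2 d i1 i2) + m3 (l3 d i1 i2)) mod d"
  have "d > 1"
    using assms(1) by (rule prime_gt_1_nat)
  then have "d > 0" by simp
  have \<theta>: "\<And>l. l < d \<Longrightarrow> \<theta> l ^ d = omega d ^ l"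
    using assms(2) by blast
  define P where "P = (\<Prod>x<d. \<theta> x)"
  have "\<theta> x ^ d \<noteq> 0" if "x < d" for x
    using \<theta>[OF that] omega_nonzero by simp
  then have "P \<noteq> 0"
    by (simp add: P_def)
  have "(\<Sum>x<d. mbqc_output d \<theta> x 0) mod d = (\<Sum>x<d. mbqc_output d \<theta> x 1) mod d"
    using noncontextual_column_sum_mod[OF \<open>d > 0\<close> _ model] \<open>d > 1\<close> by simp
  then have "P\<^sup>2 * omega d ^ 0 = P\<^sup>2 * omega d ^ 1"
    using omega_power_column_sum[OF \<open>d > 0\<close> \<theta>, of 0] omega_power_column_sum[OF \<open>d > 0\<close> \<theta>, of 1]
      \<open>d > 1\<close> by (simp only: P_def omega_power_eq_iff[OF \<open>d > 0\<close>, symmetric])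
  moreover have "omega d ^ 0 \<noteq> omega d ^ 1"
    using \<open>d > 1\<close> by (simp only: omega_power_eq_iff[OF \<open>d > 0\<close>]) simp
  ultimately show False
    using \<open>P \<noteq> 0\<close> by simp
qed

end
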